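(* Let $n\ge 1$ and $k\ge 0$ be integers, and let $C_n=\{v_0,\dots,v_{n-1}\}$ with metric $d(v_i,v_j)=\min\{|i-j|,n-|i-j|\}$. For indices taken modulo $n$, put $\sigma_i=\{v_i,v_{i+1},\dots,v_{i+k}\}$, $\sigma_i'=\{v_i,v_{i+k},v_{i+2k}\}$ and $\sigma_i''=\{v_i,v_{i+k},v_{i+2k-1},v_{i+2k}\}$. Then the set of maximal simplices of $\mathrm{VR}(C_n;k)$ is $\{\sigma_i: 0\le i\le n-1\}$ if $n>3k$; $\{\sigma_i: 0\le i\le n-1\}\cup\{\sigma_i': 0\le i\le n-1\}$ if $n=3k$ and $k\ge 2$; $\{\sigma_i: 0\le i\le n-1\}\cup\{\sigma_i'': 0\le i\le n-1\}$ if $n=3k-1$ and $k\ge 3$.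
   Context: $\mathrm{VR}(X;r)$ is the simplicial complex on vertex set $X$ whose simplices are the finite nonempty subsets of diameter at most $r$; a maximal simplex is one not properly contained in another simplex. *)

theory Defs
  imports Main
begin

text \<open>Cycle graph C_n: vertex v_i is represented by the natural number i < n.\<close>
definition cyc_vertices :: "nat \<Rightarrow> nat set" where
  "cyc_vertices n = {..<n}"

definition cyc_dist :: "nat \<Rightarrow> nat \<Rightarrow> nat \<Rightarrow> nat" where
  "cyc_dist n i j = (let d = (if i \<le> j then j - i else i - j) in min d (n - d))"

definition diam :: "('a \<Rightarrow> 'a \<Rightarrow> nat) \<Rightarrow> 'a set \<Rightarrow> nat" where
  "diam d S = Max {d x y | x y. x \<in> S \<and> y \<in> S}"

definition VR :: "'a set \<Rightarrow> ('a \<Rightarrow> 'a \<Rightarrow> nat) \<Rightarrow> nat \<Rightarrow> 'a set set" where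
  "VR X d r = {S. S \<subseteq> X \<and> finite S \<and> S \<noteq> {} \<and> diam d S \<le> r}"

definition maximal_simplices :: "'a set set \<Rightarrow> 'a set set" where
  "maximal_simplices K = {S \<in> K. \<forall>T \<in> K. S \<subseteq> T \<longrightarrow> T = S}"

definition sigma :: "nat \<Rightarrow> nat \<Rightarrow> nat \<Rightarrow> nat set" where
  "sigma n k i = {(i + j) mod n | j. j \<le> k}"

definition sigma' :: "nat \<Rightarrow> nat \<Rightarrow> nat \<Rightarrow> nat set" where
  "sigma' n k i = {i mod n, (i + k) mod n, (i + 2*k) mod n}"

definition sigma'' :: "nat \<Rightarrow> nat \<Rightarrow> nat \<Rightarrow> nat set" where
  "sigma'' n k i = {i mod n, (i + k) mod n, (i + 2*k - 1) mod n, (i + 2*k) mod n}"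

end

theory Submission
  imports Defs
begin

(* Rotations of the cycle are isometries, so they permute the maximal simplices and it suffices
   to find the maximal simplices through the vertex 0.  A simplex S through 0 lies within distance
   k of 0.  Either S fits into one arc sigma_i of k + 1 consecutive vertices, or it contains vertices
   x <= k < m such that 0, x, m cut the cycle into three arcs of length at most k, whence n <= 3k.
   For n = 3k the only such triangle is {0, k, 2k}, which is already maximal.  For n = 3k - 1 there
   are three such triangles; each has exactly two further common neighbours, which are too far apart
   to be added together, and the two resulting extensions are rotations of sigma''. *)

lemma diam_le_iff:
  assumes "finite S" "S \<noteq> {}"
  shows "diam d S \<le> r \<longleftrightarrow> (\<forall>x\<in>S. \<forall>y\<in>S. d x y \<le> r)"
proof -
  have "{d x y | x y. x \<in> S \<and> y \<in> S} = (\<lambda>(x, y). d x y) ` (S \<times> S)" by auto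
  then show ?thesis
    using assms unfolding diam_def by (subst Max_le_iff) auto
qed

lemma VR_iff:
  "S \<in> VR X d r \<longleftrightarrow> S \<subseteq> X \<and> finite S \<and> S \<noteq> {} \<and> (\<forall>x\<in>S. \<forall>y\<in>S. d x y \<le> r)"
  unfolding VR_def using diam_le_iff by blast

lemma maximal_simplices_VR_iff:
  assumes d_sym: "\<And>x y. x \<in> X \<Longrightarrow> y \<in> X \<Longrightarrow> d x y = d y x"
    and d_refl: "\<And>x. x \<in> X \<Longrightarrow> d x x \<le> r"
  shows "S \<in> maximal_simplices (VR X d r) \<longleftrightarrow>
           S \<in> VR X d r \<and> (\<forall>y\<in>X. (\<forall>x\<in>S. d x y \<le> r) \<longrightarrow> y \<in> S)"
proof
  assume max: "S \<in> maximal_simplices (VR X d r)"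
  then have S: "S \<in> VR X d r" unfolding maximal_simplices_def by blast
  have "y \<in> S" if "y \<in> X" "\<forall>x\<in>S. d x y \<le> r" for y
  proof -
    have "d a b \<le> r" if "a \<in> insert y S" "b \<in> insert y S" for a b
      using that S \<open>y \<in> X\<close> \<open>\<forall>x\<in>S. d x y \<le> r\<close> d_refl d_sym[of y]
      unfolding VR_iff by (metis insert_iff subsetD)
    then have "insert y S \<in> VR X d r"
      using S \<open>y \<in> X\<close> unfolding VR_iff by blast
    then show ?thesis using max unfolding maximal_simplices_def by blast
  qed
  with S show "S \<in> VR X d r \<and> (\<forall>y\<in>X. (\<forall>x\<in>S. d x y \<le> r) \<longrightarrow> y \<in> S)" by blast
next
  assume S: "S \<in> VR X d r \<and> (\<forall>y\<in>X. (\<forall>x\<in>S. d x y \<le> r) \<longrightarrow> y \<in> S)"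
  have "T \<subseteq> S" if "T \<in> VR X d r" "S \<subseteq> T" for T
  proof
    fix y assume "y \<in> T"
    then show "y \<in> S" using S that unfolding VR_iff by blast
  qed
  then show "S \<in> maximal_simplices (VR X d r)"
    using S unfolding maximal_simplices_def by blast
qed

lemma maximal_simplices_VR_image:
  assumes d_sym: "\<And>x y. x \<in> X \<Longrightarrow> y \<in> X \<Longrightarrow> d x y = d y x"
    and d_refl: "\<And>x. x \<in> X \<Longrightarrow> d x x \<le> r"
    and onto: "f ` X = X"
    and isom: "\<And>x y. x \<in> X \<Longrightarrow> y \<in> X \<Longrightarrow> d (f x) (f y) = d x y"
    and S: "S \<in> maximal_simplices (VR X d r)"
  shows "f ` S \<in> maximal_simplices (VR X d r)"
proof -
  have max_iff: "T \<in> maximal_simplices (VR X d r) \<longleftrightarrow>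
      T \<in> VR X d r \<and> (\<forall>y\<in>X. (\<forall>x\<in>T. d x y \<le> r) \<longrightarrow> y \<in> T)" for T
    using d_sym d_refl by (rule maximal_simplices_VR_iff)
  have S_VR: "S \<in> VR X d r" using S unfolding maximal_simplices_def by blast
  then have SX: "S \<subseteq> X" unfolding VR_iff by blast
  have "\<forall>x\<in>S. \<forall>y\<in>S. d (f x) (f y) \<le> r"
    using S_VR SX isom unfolding VR_iff by (metis subsetD)
  moreover have "f ` S \<subseteq> X" using SX onto by blast
  ultimately have "f ` S \<in> VR X d r"
    using S_VR unfolding VR_iff by auto
  moreover have "y \<in> f ` S" if "y \<in> X" "\<forall>x\<in>f ` S. d x y \<le> r" for y
  proof -
    obtain z where z: "z \<in> X" "y = f z" using onto \<open>y \<in> X\<close> by blast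
    then have "\<forall>x\<in>S. d x z \<le> r" using that(2) isom SX by (metis image_eqI subsetD)
    then show ?thesis using max_iff[THEN iffD1, OF S] z by blast
  qed
  ultimately show ?thesis using max_iff by blast
qed

lemma VR_subset_by_far_pair:
  assumes "S \<in> VR X d r" "A \<subseteq> S"
    and "\<forall>y\<in>X. (\<forall>x\<in>A. d x y \<le> r) \<longrightarrow> y \<in> insert p (insert q A)"
    and "r < d p q"
  shows "S \<subseteq> insert p A \<or> S \<subseteq> insert q A"
proof -
  have "S \<subseteq> insert p (insert q A)" using assms(1-3) unfolding VR_iff by blast
  moreover have "\<not> (p \<in> S \<and> q \<in> S)" using assms(1,4) unfolding VR_iff by fastforce
  ultimately show ?thesis by blast
qed

abbreviation cycle_VR :: "nat \<Rightarrow> nat \<Rightarrow> nat set set" where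
  "cycle_VR n k \<equiv> VR (cyc_vertices n) (cyc_dist n) k"

lemma cycle_VR_iff:
  "S \<in> cycle_VR n k \<longleftrightarrow> S \<subseteq> {..<n} \<and> S \<noteq> {} \<and> (\<forall>x\<in>S. \<forall>y\<in>S. cyc_dist n x y \<le> k)"
  unfolding VR_iff cyc_vertices_def using finite_subset by blast

lemma cyc_dist_commute: "cyc_dist n x y = cyc_dist n y x"
  unfolding cyc_dist_def by simp

lemma cyc_dist_self [simp]: "cyc_dist n x x = 0"
  unfolding cyc_dist_def by simp

lemma cyc_dist_le_iff:
  "cyc_dist n x y \<le> k \<longleftrightarrow> (y \<le> x + k \<and> x \<le> y + k) \<or> n + x \<le> y + k \<or> n + y \<le> x + k"
  unfolding cyc_dist_def Let_def by (cases "x \<le> y") (auto simp: min_def)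

lemma maximal_simplices_cycle_VR_iff:
  "S \<in> maximal_simplices (cycle_VR n k) \<longleftrightarrow>
     S \<in> cycle_VR n k \<and> (\<forall>y<n. (\<forall>x\<in>S. cyc_dist n x y \<le> k) \<longrightarrow> y \<in> S)"
proof -
  have "S \<in> maximal_simplices (cycle_VR n k) \<longleftrightarrow>
     S \<in> cycle_VR n k \<and> (\<forall>y\<in>cyc_vertices n. (\<forall>x\<in>S. cyc_dist n x y \<le> k) \<longrightarrow> y \<in> S)"
    by (rule maximal_simplices_VR_iff) (simp_all add: cyc_dist_commute)
  then show ?thesis by (simp add: cyc_vertices_def Ball_def)
qed

definition cyc_shift :: "nat \<Rightarrow> nat \<Rightarrow> nat \<Rightarrow> nat" where
  "cyc_shift n t x = (x + t) mod n"

lemma int_cyc_dist: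
  assumes "x < n" "y < n"
  shows "int (cyc_dist n x y) = min ((int x - int y) mod int n) ((int y - int x) mod int n)"
proof -
  have "int (cyc_dist n x y) = min ((int x - int y) mod int n) ((int y - int x) mod int n)"
    if "x < y" "y < n" for x y
  proof -
    have "(int x - int y) mod int n = (int x - int y + int n) mod int n" by simp
    also have "\<dots> = int x - int y + int n" using that by (intro mod_pos_pos_trivial) auto
    finally have "(int x - int y) mod int n = int (n - (y - x))" using that by (simp add: of_nat_diff)
    moreover have "(int y - int x) mod int n = int (y - x)"
      using that by (simp add: mod_pos_pos_trivial of_nat_diff)
    moreover have "cyc_dist n x y = min (y - x) (n - (y - x))"
      using that by (simp add: cyc_dist_def)
    ultimately show ?thesis by (simp add: min_def)
  qed
  then show ?thesis
    using assms by (cases x y rule: linorder_cases) (auto simp: cyc_dist_def cyc_dist_commute min.commute)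
qed

lemma cyc_dist_shift:
  assumes "x < n" "y < n"
  shows "cyc_dist n (cyc_shift n t x) (cyc_shift n t y) = cyc_dist n x y"
proof -
  have "n > 0" using assms by simp
  have "(int ((x + t) mod n) - int ((y + t) mod n)) mod int n = (int x - int y) mod int n" for x y
    by (simp add: of_nat_mod mod_diff_eq)
  then have "int (cyc_dist n (cyc_shift n t x) (cyc_shift n t y)) = int (cyc_dist n x y)"
    using assms \<open>n > 0\<close> by (simp add: int_cyc_dist cyc_shift_def)
  then show ?thesis by simp
qed

lemma cyc_shift_shift: "cyc_shift n a (cyc_shift n b x) = cyc_shift n (b + a) x"
  unfolding cyc_shift_def by (simp add: mod_add_left_eq add.assoc)

lemma cyc_shift_mod: "cyc_shift n (t mod n) = cyc_shift n t"
  unfolding cyc_shift_def by (simp add: fun_eq_iff mod_add_right_eq)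

lemma cyc_shift_inverse:
  assumes "x < n"
  shows "cyc_shift n t (cyc_shift n (n - t mod n) x) = x"
proof -
  have "(n - t mod n + t) mod n = (n - t mod n + t mod n) mod n" by (simp add: mod_add_right_eq)
  also have "\<dots> = 0" using assms by simp
  finally show ?thesis
    using assms unfolding cyc_shift_shift by (simp add: cyc_shift_def mod_add_right_eq[symmetric])
qed

lemma cyc_shift_image:
  assumes "n > 0"
  shows "cyc_shift n t ` {..<n} = {..<n}"
proof
  show "cyc_shift n t ` {..<n} \<subseteq> {..<n}" using assms by (auto simp: cyc_shift_def)
  show "{..<n} \<subseteq> cyc_shift n t ` {..<n}"
  proof
    fix y assume "y \<in> {..<n}"
    then have "y = cyc_shift n t (cyc_shift n (n - t mod n) y)"
      by (simp add: cyc_shift_inverse)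
    moreover have "cyc_shift n (n - t mod n) y < n" using assms by (simp add: cyc_shift_def)
    ultimately show "y \<in> cyc_shift n t ` {..<n}" by blast
  qed
qed

definition cyc_orbit :: "nat \<Rightarrow> nat set \<Rightarrow> nat set set" where
  "cyc_orbit n B = {cyc_shift n i ` B | i. i < n}"

lemma shift_mem_cyc_orbit:
  assumes "n > 0"
  shows "cyc_shift n t ` B \<in> cyc_orbit n B"
  unfolding cyc_orbit_def using assms by (metis (mono_tags) cyc_shift_mod mem_Collect_eq mod_less_divisor)

lemma cyc_orbit_conv:
  "(\<And>i. f i = cyc_shift n i ` f 0) \<Longrightarrow> {f i | i. i < n} = cyc_orbit n (f 0)"
  unfolding cyc_orbit_def by metis

lemma maximal_simplices_cycle_shift:
  assumes "S \<in> maximal_simplices (cycle_VR n k)"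
  shows "cyc_shift n t ` S \<in> maximal_simplices (cycle_VR n k)"
proof (rule maximal_simplices_VR_image[OF _ _ _ _ assms])
  have "S \<in> cycle_VR n k" using assms unfolding maximal_simplices_def by blast
  then have "n > 0" unfolding cycle_VR_iff by fastforce
  then show "cyc_shift n t ` cyc_vertices n = cyc_vertices n"
    unfolding cyc_vertices_def by (rule cyc_shift_image)
qed (auto simp: cyc_vertices_def cyc_dist_shift cyc_dist_commute)

lemma maximal_simplices_cycle_eq_orbits:
  assumes bases: "Bs \<subseteq> maximal_simplices (cycle_VR n k)"
    and cover: "\<And>S. S \<in> cycle_VR n k \<Longrightarrow> 0 \<in> S \<Longrightarrow> \<exists>L \<in> (\<Union>B\<in>Bs. cyc_orbit n B). S \<subseteq> L"
  shows "maximal_simplices (cycle_VR n k) = (\<Union>B\<in>Bs. cyc_orbit n B)"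
proof
  show "(\<Union>B\<in>Bs. cyc_orbit n B) \<subseteq> maximal_simplices (cycle_VR n k)"
    using bases maximal_simplices_cycle_shift unfolding cyc_orbit_def by blast
  show "maximal_simplices (cycle_VR n k) \<subseteq> (\<Union>B\<in>Bs. cyc_orbit n B)"
  proof
    fix S assume S: "S \<in> maximal_simplices (cycle_VR n k)"
    then have "S \<in> cycle_VR n k" unfolding maximal_simplices_def by blast
    then obtain a where a: "a \<in> S" "a < n" and Sn: "S \<subseteq> {..<n}"
      unfolding cycle_VR_iff by blast
    define S' where "S' = cyc_shift n (n - a) ` S"
    have S'_max: "S' \<in> maximal_simplices (cycle_VR n k)"
      unfolding S'_def using S by (rule maximal_simplices_cycle_shift)
    have "0 \<in> S'" unfolding S'_def cyc_shift_def using a by force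
    moreover have "S' \<in> cycle_VR n k" using S'_max unfolding maximal_simplices_def by blast
    ultimately obtain B L where B: "B \<in> Bs" and "L \<in> cyc_orbit n B" "S' \<subseteq> L"
      using cover by blast
    then obtain i where L: "S' \<subseteq> cyc_shift n i ` B" unfolding cyc_orbit_def by blast
    have "cyc_shift n i ` B \<in> maximal_simplices (cycle_VR n k)"
      using B bases by (intro maximal_simplices_cycle_shift) blast
    then have "S' = cyc_shift n i ` B" using S'_max L unfolding maximal_simplices_def by blast
    moreover have "cyc_shift n a ` S' = id ` S"
      unfolding S'_def image_image
    proof (rule image_cong)
      fix x assume "x \<in> S"
      then show "cyc_shift n a (cyc_shift n (n - a) x) = id x"
        using Sn a(2) cyc_shift_inverse[of x n a] by auto
    qed (rule refl)
    ultimately have "S = cyc_shift n (i + a) ` B" by (simp add: image_image cyc_shift_shift)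
    moreover have "cyc_shift n (i + a) ` B \<in> cyc_orbit n B"
      using a(2) by (intro shift_mem_cyc_orbit) simp
    ultimately show "S \<in> (\<Union>B\<in>Bs. cyc_orbit n B)" using B by blast
  qed
qed

lemma sigma_conv_image: "sigma n k i = (\<lambda>j. (i + j) mod n) ` {..k}"
  unfolding sigma_def by auto

lemma mem_sigmaI: "j \<le> k \<Longrightarrow> (i + j) mod n \<in> sigma n k i"
  unfolding sigma_def by blast

lemma sigma_zero: "k < n \<Longrightarrow> sigma n k 0 = {..k}"
  unfolding sigma_def by force

lemma subset_sigma_wrapI:
  assumes "S \<subseteq> {..<n}" "m < n" "n \<le> m + k" "\<And>y. y \<in> S \<Longrightarrow> m \<le> y \<or> y + n \<le> m + k"
  shows "S \<subseteq> sigma n k m"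
proof
  fix y assume "y \<in> S"
  then have "y < n" using assms(1) by auto
  consider "m \<le> y" | "y + n \<le> m + k" using assms(4) \<open>y \<in> S\<close> by blast
  then show "y \<in> sigma n k m"
  proof cases
    case 1
    then have "y = (m + (y - m)) mod n" using \<open>y < n\<close> by simp
    moreover have "y - m \<le> k" using \<open>y < n\<close> assms(3) by linarith
    ultimately show ?thesis using mem_sigmaI by metis
  next
    case 2
    have "y = (m + (y + n - m)) mod n" using \<open>y < n\<close> assms(2) by simp
    moreover have "y + n - m \<le> k" using 2 by linarith
    ultimately show ?thesis using mem_sigmaI by metis
  qed
qed

lemma sigma_eq_shift: "sigma n k i = cyc_shift n i ` sigma n k 0"
  unfolding sigma_conv_image cyc_shift_def image_image by (simp add: mod_add_right_eq add.commute)

lemma sigma'_eq_shift: "sigma' n k i = cyc_shift n i ` sigma' n k 0"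
  unfolding sigma'_def cyc_shift_def by (simp add: mod_add_left_eq mod_add_right_eq add.commute)

lemma sigma''_eq_shift: "1 \<le> k \<Longrightarrow> sigma'' n k i = cyc_shift n i ` sigma'' n k 0"
  unfolding sigma''_def cyc_shift_def by (simp add: mod_add_left_eq mod_add_right_eq add.commute)

lemma sigma_mem_cyc_orbit: "0 < n \<Longrightarrow> sigma n k i \<in> cyc_orbit n (sigma n k 0)"
  unfolding sigma_eq_shift[of n k i] by (rule shift_mem_cyc_orbit)

lemma sigma'_mem_cyc_orbit: "0 < n \<Longrightarrow> sigma' n k i \<in> cyc_orbit n (sigma' n k 0)"
  unfolding sigma'_eq_shift[of n k i] by (rule shift_mem_cyc_orbit)

lemma sigma''_mem_cyc_orbit: "0 < n \<Longrightarrow> 1 \<le> k \<Longrightarrow> sigma'' n k i \<in> cyc_orbit n (sigma'' n k 0)"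
  unfolding sigma''_eq_shift[of k n i] by (rule shift_mem_cyc_orbit)

lemma sigma_zero_maximal:
  assumes "k < n" "k = 0 \<or> 2 * k + 1 < n"
  shows "sigma n k 0 \<in> maximal_simplices (cycle_VR n k)"
proof -
  have "{..k} \<in> cycle_VR n k"
    using assms(1) unfolding cycle_VR_iff cyc_dist_le_iff by auto
  moreover have "y \<le> k" if "y < n" "\<forall>x\<in>{..k}. cyc_dist n x y \<le> k" for y
  proof (rule ccontr)
    assume "\<not> y \<le> k"
    moreover have "cyc_dist n 0 y \<le> k" using that(2) by simp
    ultimately have "n \<le> y + k" using \<open>y < n\<close> unfolding cyc_dist_le_iff by linarith
    \<comment> \<open>(y + k + 1) mod n lies in {..k}, at distance min (k + 1) (n - k - 1) > k from y\<close>
    moreover have "cyc_dist n (y + k + 1 - n) y \<le> k"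
      using that(2) \<open>n \<le> y + k\<close> \<open>y < n\<close> by simp
    ultimately show False
      using assms \<open>y < n\<close> \<open>\<not> y \<le> k\<close> unfolding cyc_dist_le_iff by linarith
  qed
  ultimately show ?thesis
    using assms(1) unfolding maximal_simplices_cycle_VR_iff sigma_zero[OF assms(1)] by auto
qed

lemma common_neighbours_3k:
  assumes "n = 3 * k" "2 \<le> k" "y < n" "\<forall>x\<in>{0, k, 2 * k}. cyc_dist n x y \<le> k"
  shows "y \<in> {0, k, 2 * k}"
  using assms unfolding cyc_dist_le_iff by simp linarith

lemma sigma'_zero_maximal:
  assumes "n = 3 * k" "2 \<le> k"
  shows "sigma' n k 0 \<in> maximal_simplices (cycle_VR n k)"
proof -
  have "sigma' n k 0 = {0, k, 2 * k}" using assms unfolding sigma'_def by simp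
  moreover have "{0, k, 2 * k} \<in> cycle_VR n k"
    using assms unfolding cycle_VR_iff cyc_dist_le_iff by auto
  ultimately show ?thesis
    using common_neighbours_3k[OF assms] unfolding maximal_simplices_cycle_VR_iff by auto
qed

(* The case n = 3k - 1 is parametrised by m = k - 1, i.e. n = 3m + 2, to avoid truncated subtraction. *)

lemma common_neighbours_3m2:
  assumes "n = 3 * m + 2" "2 \<le> m" "y < n"
  shows "\<forall>x\<in>{0, m + 1, 2 * m + 1}. cyc_dist n x y \<le> m + 1 \<Longrightarrow>
           y \<in> insert m (insert (2 * m + 2) {0, m + 1, 2 * m + 1})"
    and "\<forall>x\<in>{0, m + 1, 2 * m + 2}. cyc_dist n x y \<le> m + 1 \<Longrightarrow>
           y \<in> insert 1 (insert (2 * m + 1) {0, m + 1, 2 * m + 2})"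
    and "\<forall>x\<in>{0, m, 2 * m + 1}. cyc_dist n x y \<le> m + 1 \<Longrightarrow>
           y \<in> insert (m + 1) (insert (3 * m + 1) {0, m, 2 * m + 1})"
  using assms unfolding cyc_dist_le_iff by (simp_all, linarith+)

lemma far_pairs_3m2:
  assumes "n = 3 * m + 2" "2 \<le> m"
  shows "m + 1 < cyc_dist n m (2 * m + 2)"
    and "m + 1 < cyc_dist n 1 (2 * m + 1)"
    and "m + 1 < cyc_dist n (m + 1) (3 * m + 1)"
  using assms by (simp_all add: cyc_dist_def)

lemma sigma''_values_3m2:
  assumes "n = 3 * m + 2" "2 \<le> m"
  shows "sigma'' n (m + 1) 0 = {0, m + 1, 2 * m + 1, 2 * m + 2}"
    and "sigma'' n (m + 1) (m + 1) = {0, 1, m + 1, 2 * m + 2}"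
    and "sigma'' n (m + 1) (2 * m + 1) = {0, m, m + 1, 2 * m + 1}"
    and "sigma'' n (m + 1) m = {0, m, 2 * m + 1, 3 * m + 1}"
proof -
  have unfold: "sigma'' n (m + 1) i =
      {i mod n, (i + m + 1) mod n, (i + 2 * m + 1) mod n, (i + 2 * m + 2) mod n}" for i
    unfolding sigma''_def by (simp add: algebra_simps)
  show "sigma'' n (m + 1) 0 = {0, m + 1, 2 * m + 1, 2 * m + 2}"
    using assms unfolding unfold by simp
  have "(m + 1) mod n = m + 1" "(m + 1 + m + 1) mod n = 2 * m + 2"
    "(m + 1 + 2 * m + 1) mod n = 0" "(m + 1 + 2 * m + 2) mod n = 1"
    using assms by (simp_all add: mod_if)
  then show "sigma'' n (m + 1) (m + 1) = {0, 1, m + 1, 2 * m + 2}"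
    unfolding unfold by auto
  have "(2 * m + 1) mod n = 2 * m + 1" "(2 * m + 1 + m + 1) mod n = 0"
    "(2 * m + 1 + 2 * m + 1) mod n = m" "(2 * m + 1 + 2 * m + 2) mod n = m + 1"
    using assms by (simp_all add: mod_if)
  then show "sigma'' n (m + 1) (2 * m + 1) = {0, m, m + 1, 2 * m + 1}"
    unfolding unfold by auto
  have "m mod n = m" "(m + m + 1) mod n = 2 * m + 1"
    "(m + 2 * m + 1) mod n = 3 * m + 1" "(m + 2 * m + 2) mod n = 0"
    using assms by (simp_all add: mod_if)
  then show "sigma'' n (m + 1) m = {0, m, 2 * m + 1, 3 * m + 1}"
    unfolding unfold by auto
qed

lemma sigma''_zero_maximal:
  assumes "n = 3 * m + 2" "2 \<le> m"
  shows "sigma'' n (m + 1) 0 \<in> maximal_simplices (cycle_VR n (m + 1))"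
proof -
  have "{0, m + 1, 2 * m + 1, 2 * m + 2} \<in> cycle_VR n (m + 1)"
    using assms unfolding cycle_VR_iff cyc_dist_le_iff by auto
  moreover have "y \<in> {0, m + 1, 2 * m + 1, 2 * m + 2}"
    if "y < n" "\<forall>x\<in>{0, m + 1, 2 * m + 1, 2 * m + 2}. cyc_dist n x y \<le> m + 1" for y
  proof -
    have "y \<noteq> m" using that(2) far_pairs_3m2(1)[OF assms] by (auto simp: cyc_dist_commute)
    then show ?thesis using that common_neighbours_3m2(1)[OF assms \<open>y < n\<close>] by auto
  qed
  ultimately show ?thesis
    unfolding maximal_simplices_cycle_VR_iff sigma''_values_3m2(1)[OF assms] by blast
qed

lemma cycle_clique_in_sigma_or_triangle:
  assumes S: "S \<in> cycle_VR n k" and "0 \<in> S" "k < n"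
  obtains i where "S \<subseteq> sigma n k i"
    | x m where "x \<in> S" "m \<in> S" "x \<le> k" "k < m" "m \<le> x + k" "n \<le> m + k"
proof -
  have Sn: "S \<subseteq> {..<n}" and near: "\<And>x y. x \<in> S \<Longrightarrow> y \<in> S \<Longrightarrow> cyc_dist n x y \<le> k"
    using S unfolding cycle_VR_iff by auto
  have low_or_high: "y \<le> k \<or> n \<le> y + k" if "y \<in> S" for y
    using near[OF \<open>0 \<in> S\<close> that] unfolding cyc_dist_le_iff by auto
  define H where "H = {y \<in> S. k < y}"
  show thesis
  proof (cases "H = {}")
    case True
    then have "S \<subseteq> sigma n k 0" using sigma_zero[OF \<open>k < n\<close>] H_def by auto
    then show thesis by (rule that(1))
  next
    case False
    define m where "m = Min H"
    have "finite H" using Sn unfolding H_def by (simp add: finite_subset)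
    then have m: "m \<in> S" "k < m" and m_min: "\<And>y. y \<in> S \<Longrightarrow> k < y \<Longrightarrow> m \<le> y"
      using False Min_in[of H] Min_le[of H] unfolding m_def H_def by auto
    have "m < n" using m Sn by auto
    have "n \<le> m + k" using low_or_high[OF m(1)] m(2) by auto
    show thesis
    proof (cases "\<exists>x\<in>S. x \<le> k \<and> m + k < x + n")
      case True
      then obtain x where x: "x \<in> S" "x \<le> k" "m + k < x + n" by blast
      have "m \<le> x + k"
        using near[OF x(1) m(1)] x m \<open>m < n\<close> unfolding cyc_dist_le_iff by linarith
      then show thesis using that(2) x m \<open>n \<le> m + k\<close> by blast
    next
      case False
      then have wraps: "m \<le> y \<or> y + n \<le> m + k" if "y \<in> S" for y
        using that m_min by fastforce
      have "S \<subseteq> sigma n k m" by (rule subset_sigma_wrapI[OF Sn \<open>m < n\<close> \<open>n \<le> m + k\<close> wraps])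
      then show thesis by (rule that(1))
    qed
  qed
qed

lemma maximal_simplices_cycle_sparse:
  assumes "3 * k < n"
  shows "maximal_simplices (cycle_VR n k) = cyc_orbit n (sigma n k 0)"
proof -
  have "\<exists>L \<in> (\<Union>B\<in>{sigma n k 0}. cyc_orbit n B). S \<subseteq> L"
    if "S \<in> cycle_VR n k" "0 \<in> S" for S
  proof (rule cycle_clique_in_sigma_or_triangle[OF that])
    show "k < n" using assms by simp
    fix i assume "S \<subseteq> sigma n k i"
    then show ?thesis using sigma_mem_cyc_orbit[of n k i] assms by auto
  next
    fix x m assume "x \<le> k" "k < m" "m \<le> x + k" "n \<le> m + k"
    then show ?thesis using assms by linarith
  qed
  moreover have "sigma n k 0 \<in> maximal_simplices (cycle_VR n k)"
    using assms by (intro sigma_zero_maximal) linarith+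
  ultimately show ?thesis
    using maximal_simplices_cycle_eq_orbits[of "{sigma n k 0}" n k] by simp
qed

lemma maximal_simplices_cycle_3k:
  assumes "n = 3 * k" "2 \<le> k"
  shows "maximal_simplices (cycle_VR n k) = cyc_orbit n (sigma n k 0) \<union> cyc_orbit n (sigma' n k 0)"
proof -
  have "\<exists>L \<in> (\<Union>B\<in>{sigma n k 0, sigma' n k 0}. cyc_orbit n B). S \<subseteq> L"
    if S: "S \<in> cycle_VR n k" "0 \<in> S" for S
  proof (rule cycle_clique_in_sigma_or_triangle[OF S])
    show "k < n" using assms by simp
    fix i assume "S \<subseteq> sigma n k i"
    then show ?thesis using sigma_mem_cyc_orbit[of n k i] assms by auto
  next
    fix x m assume "x \<in> S" "m \<in> S" "x \<le> k" "k < m" "m \<le> x + k" "n \<le> m + k"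
    then have "x = k" "m = 2 * k" using assms by linarith+
    then have triangle: "{0, k, 2 * k} \<subseteq> S" using S(2) \<open>x \<in> S\<close> \<open>m \<in> S\<close> by auto
    have "S \<subseteq> {0, k, 2 * k}"
    proof
      fix y assume "y \<in> S"
      then show "y \<in> {0, k, 2 * k}"
        using S(1) triangle by (intro common_neighbours_3k[OF assms]) (auto simp: cycle_VR_iff)
    qed
    moreover have "sigma' n k 0 = {0, k, 2 * k}" using assms unfolding sigma'_def by simp
    ultimately show ?thesis using sigma'_mem_cyc_orbit[of n k 0] assms by auto
  qed
  moreover have "sigma n k 0 \<in> maximal_simplices (cycle_VR n k)"
    using assms by (intro sigma_zero_maximal) linarith+
  ultimately show ?thesis
    using maximal_simplices_cycle_eq_orbits[of "{sigma n k 0, sigma' n k 0}" n k]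
      sigma'_zero_maximal[OF assms] by simp
qed

lemma triangle_clique_in_sigma''_3m2:
  assumes "n = 3 * m + 2" "2 \<le> m"
    and S: "S \<in> cycle_VR n (m + 1)" "0 \<in> S" "x \<in> S" "y \<in> S"
    and "x \<le> m + 1" "m + 1 < y" "y \<le> x + (m + 1)" "n \<le> y + (m + 1)"
  shows "\<exists>i. S \<subseteq> sigma'' n (m + 1) i"
proof -
  have split: "S \<subseteq> insert p A \<or> S \<subseteq> insert q A"
    if "A \<subseteq> S" "\<And>z. z < n \<Longrightarrow> \<forall>a\<in>A. cyc_dist n a z \<le> m + 1 \<Longrightarrow> z \<in> insert p (insert q A)"
      "m + 1 < cyc_dist n p q" for A p q
    using S(1) that by (intro VR_subset_by_far_pair) (auto simp: cyc_vertices_def)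
  consider "x = m + 1" "y = 2 * m + 1" | "x = m + 1" "y = 2 * m + 2" | "x = m" "y = 2 * m + 1"
    using assms(1,7-) by linarith
  then show ?thesis
  proof cases
    case 1
    then have "{0, m + 1, 2 * m + 1} \<subseteq> S" using S by auto
    then have "S \<subseteq> insert m {0, m + 1, 2 * m + 1} \<or> S \<subseteq> insert (2 * m + 2) {0, m + 1, 2 * m + 1}"
      using common_neighbours_3m2(1)[OF assms(1,2)] far_pairs_3m2(1)[OF assms(1,2)] by (rule split)
    moreover have "insert m {0, m + 1, 2 * m + 1} = sigma'' n (m + 1) (2 * m + 1)"
      "insert (2 * m + 2) {0, m + 1, 2 * m + 1} = sigma'' n (m + 1) 0"
      using sigma''_values_3m2[OF assms(1,2)] by auto
    ultimately show ?thesis by metis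
  next
    case 2
    then have "{0, m + 1, 2 * m + 2} \<subseteq> S" using S by auto
    then have "S \<subseteq> insert 1 {0, m + 1, 2 * m + 2} \<or> S \<subseteq> insert (2 * m + 1) {0, m + 1, 2 * m + 2}"
      using common_neighbours_3m2(2)[OF assms(1,2)] far_pairs_3m2(2)[OF assms(1,2)] by (rule split)
    moreover have "insert 1 {0, m + 1, 2 * m + 2} = sigma'' n (m + 1) (m + 1)"
      "insert (2 * m + 1) {0, m + 1, 2 * m + 2} = sigma'' n (m + 1) 0"
      using sigma''_values_3m2[OF assms(1,2)] by auto
    ultimately show ?thesis by metis
  next
    case 3
    then have "{0, m, 2 * m + 1} \<subseteq> S" using S by auto
    then have "S \<subseteq> insert (m + 1) {0, m, 2 * m + 1} \<or> S \<subseteq> insert (3 * m + 1) {0, m, 2 * m + 1}"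
      using common_neighbours_3m2(3)[OF assms(1,2)] far_pairs_3m2(3)[OF assms(1,2)] by (rule split)
    moreover have "insert (m + 1) {0, m, 2 * m + 1} = sigma'' n (m + 1) (2 * m + 1)"
      "insert (3 * m + 1) {0, m, 2 * m + 1} = sigma'' n (m + 1) m"
      using sigma''_values_3m2[OF assms(1,2)] by auto
    ultimately show ?thesis by metis
  qed
qed

lemma maximal_simplices_cycle_3m2:
  assumes "n = 3 * m + 2" "2 \<le> m"
  shows "maximal_simplices (cycle_VR n (m + 1)) =
           cyc_orbit n (sigma n (m + 1) 0) \<union> cyc_orbit n (sigma'' n (m + 1) 0)"
proof -
  have "\<exists>L \<in> (\<Union>B\<in>{sigma n (m + 1) 0, sigma'' n (m + 1) 0}. cyc_orbit n B). S \<subseteq> L"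
    if S: "S \<in> cycle_VR n (m + 1)" "0 \<in> S" for S
  proof (rule cycle_clique_in_sigma_or_triangle[OF S])
    show "m + 1 < n" using assms by simp
    fix i assume "S \<subseteq> sigma n (m + 1) i"
    then show ?thesis using sigma_mem_cyc_orbit[of n "m + 1" i] assms by auto
  next
    fix x y assume "x \<in> S" "y \<in> S" "x \<le> m + 1" "m + 1 < y" "y \<le> x + (m + 1)" "n \<le> y + (m + 1)"
    then obtain i where "S \<subseteq> sigma'' n (m + 1) i"
      using triangle_clique_in_sigma''_3m2[OF assms S] by blast
    then show ?thesis using sigma''_mem_cyc_orbit[of n "m + 1" i] assms by auto
  qed
  moreover have "sigma n (m + 1) 0 \<in> maximal_simplices (cycle_VR n (m + 1))"
    using assms by (intro sigma_zero_maximal disjI2) simp_all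
  ultimately show ?thesis
    using maximal_simplices_cycle_eq_orbits[of "{sigma n (m + 1) 0, sigma'' n (m + 1) 0}" n "m + 1"]
      sigma''_zero_maximal[OF assms] by simp
qed

theorem lemmaA1:
  fixes n k :: nat
  assumes "n \<ge> 1"
  shows "(n > 3 * k \<longrightarrow>
           maximal_simplices (VR (cyc_vertices n) (cyc_dist n) k) = {sigma n k i | i. i < n})
       \<and> (n = 3 * k \<and> k \<ge> 2 \<longrightarrow>
           maximal_simplices (VR (cyc_vertices n) (cyc_dist n) k) =
             {sigma n k i | i. i < n} \<union> {sigma' n k i | i. i < n})
       \<and> (n = 3 * k - 1 \<and> k \<ge> 3 \<longrightarrow>
           maximal_simplices (VR (cyc_vertices n) (cyc_dist n) k) =
             {sigma n k i | i. i < n} \<union> {sigma'' n k i | i. i < n})"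
proof (intro conjI impI)
  have orbit: "{sigma n k i | i. i < n} = cyc_orbit n (sigma n k 0)"
    by (rule cyc_orbit_conv) (rule sigma_eq_shift)
  show "3 * k < n \<Longrightarrow> maximal_simplices (cycle_VR n k) = {sigma n k i | i. i < n}"
    unfolding orbit by (rule maximal_simplices_cycle_sparse)
  have "{sigma' n k i | i. i < n} = cyc_orbit n (sigma' n k 0)"
    by (rule cyc_orbit_conv) (rule sigma'_eq_shift)
  then show "n = 3 * k \<and> 2 \<le> k \<Longrightarrow> maximal_simplices (cycle_VR n k) =
      {sigma n k i | i. i < n} \<union> {sigma' n k i | i. i < n}"
    unfolding orbit by (simp add: maximal_simplices_cycle_3k)
  assume "n = 3 * k - 1 \<and> 3 \<le> k"
  then obtain m where m: "n = 3 * m + 2" "2 \<le> m" "k = m + 1" by (intro that[of "k - 1"]) auto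
  have "{sigma'' n k i | i. i < n} = cyc_orbit n (sigma'' n k 0)"
    using m(3) by (intro cyc_orbit_conv sigma''_eq_shift) simp
  then show "maximal_simplices (cycle_VR n k) =
      {sigma n k i | i. i < n} \<union> {sigma'' n k i | i. i < n}"
    using maximal_simplices_cycle_3m2[OF m(1,2)] orbit m(3) by simp
qed

end
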